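(* Let $\vartheta\in\Theta$ and let $\Delta_T>0$ satisfy $0<\liminf_{T\to\infty}\Delta_T\le\limsup_{T\to\infty}\Delta_T\le\frac{1}{4\vartheta}$. Then $$\liminf_{T\to\infty}\frac{I_{T,0}(\vartheta)^{-1}+I_{T,\infty}(\vartheta)^{-1}}{I_{T,\Delta_T}(\vartheta)^{-1}}>1,$$ where $I_{T,0}(\vartheta)=T/\vartheta$, $I_{T,\infty}(\vartheta)=\frac{T\Delta_T^{-1}}{2\vartheta^2}$ and $I_{T,\Delta}(\vartheta)=T\Delta\,\varphi(\vartheta,\Delta)$. Equivalently, $\liminf_{T\to\infty}\vartheta\Delta_T(1+2\vartheta\Delta_T)\,\varphi(\vartheta,\Delta_T)>1$.
   Context: Under $\mathbb P_\vartheta$, $X_t=\sum_{i=1}^{N_t}\varepsilon_i$ ($X_0=0$), with $(N_t)$ a homogeneous Poisson process of intensity $\vartheta\in\Theta\subseteq(0,\infty)$ and $\varepsilon_i$ i.i.d., independent of $(N_t)$, $\mathbb P(\varepsilon_i=\pm1)=1/2$. Then $\mathbb P_\vartheta(X_\Delta=k)=e^{-\vartheta\Delta}\mathcal I_{|k|}(\vartheta\Delta)$, $k\in\mathbb Z$, with $\mathcal I_\nu(x)=\sum_{m\ge0}\frac{(x/2)^{2m+\nu}}{m!\,\Gamma(\nu+m+1)}$ the modified Bessel function of the first kind. Set $h_\Delta(\vartheta,k)=\mathcal I_{|k|+1}(\vartheta\Delta)/\mathcal I_{|k|}(\vartheta\Delta)$ and $\varphi(\vartheta,\Delta)=\mathbb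 E_\vartheta\big[\big(h_\Delta(\vartheta,X_\Delta)+(\vartheta\Delta)^{-1}|X_\Delta|-1\big)^2\big]$. *)

theory Defs
  imports "HOL-Analysis.Analysis"
begin

text \<open>Modified Bessel function of the first kind of integer order n \<ge> 0:
  I_n(x) = sum_{m\<ge>0} (x/2)^(2m+n) / (m! Gamma(n+m+1)), with Gamma(n+m+1) = (n+m)!.\<close>
definition besselI :: "nat \<Rightarrow> real \<Rightarrow> real" where
  "besselI n x = (\<Sum>m. (x / 2) ^ (2 * m + n) / (fact m * fact (n + m)))"

text \<open>P_theta(X_Delta = k) = exp(-theta Delta) I_{|k|}(theta Delta).\<close>
definition pX :: "real \<Rightarrow> real \<Rightarrow> int \<Rightarrow> real" where
  "pX \<theta> \<Delta> k = exp (- \<theta> * \<Delta>) * besselI (nat \<bar>k\<bar>) (\<theta> * \<Delta>)"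

definition hD :: "real \<Rightarrow> real \<Rightarrow> int \<Rightarrow> real" where
  "hD \<Delta> \<theta> k = besselI (nat \<bar>k\<bar> + 1) (\<theta> * \<Delta>) / besselI (nat \<bar>k\<bar>) (\<theta> * \<Delta>)"

text \<open>phi(theta,Delta) = E_theta[(h_Delta(theta,X_Delta) + |X_Delta|/(theta Delta) - 1)^2],
  written as the sum over the law of X_Delta on the integers.\<close>
definition phi :: "real \<Rightarrow> real \<Rightarrow> real" where
  "phi \<theta> \<Delta> = (\<Sum>\<^sub>\<infinity>k\<in>(UNIV::int set).
      pX \<theta> \<Delta> k * (hD \<Delta> \<theta> k + \<bar>real_of_int k\<bar> / (\<theta> * \<Delta>) - 1)^2)"

definition I0 :: "real \<Rightarrow> real \<Rightarrow> real" where
  "I0 T \<theta> = T / \<theta>"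

definition Iinf :: "real \<Rightarrow> real \<Rightarrow> real \<Rightarrow> real" where
  "Iinf T \<Delta> \<theta> = T * inverse \<Delta> / (2 * \<theta>^2)"

definition IDelta :: "real \<Rightarrow> real \<Rightarrow> real \<Rightarrow> real" where
  "IDelta T \<Delta> \<theta> = T * \<Delta> * phi \<theta> \<Delta>"

end

theory Submission
  imports Defs
begin

text \<open>
  Write x = \<theta>\<Delta>. Since X_\<Delta> has the law p_x(k) = e^{-x} I_|k|(x) on the integers, the
  quotient in the theorem equals V(x) \<phi>(\<theta>,\<Delta>) with V(x) = x + 2x^2, and \<phi> is the second
  moment E[S^2] of the score S(k) = I_{|k|+1}(x)/I_|k|(x) + |k|/x - 1.  The proof is a
  Cauchy-Schwarz argument with an explicit remainder.

  The Bessel recurrence I_{n} - I_{n+2} = (2(n+1)/x) I_{n+1} gives two difference equations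
  for the law: k p(k) = x/2 (p(k-1) - p(k+1)) (a Stein identity) and
  p(k) S(k) = (p(k-1) + p(k+1))/2 - p(k).  Summing them against test functions of
  polynomial growth yields E[k^2] = x, E[k^4] = 3x^2 + x, hence Var(k^2) = V(x), and
  E[S (k^2 - x)] = 1.  Expanding E[(S - (k^2 - x)/V)^2] \<ge> 0 and keeping the atom at k = 0
  gives V E[S^2] \<ge> 1 + V p(0) (S(0) + x/V)^2, and the last term is bounded below uniformly
  for x in [a, 1].  The hypotheses on \<Delta>_T place \<theta>\<Delta>_T in such an interval eventually.
\<close>

definition bessel_term :: "nat \<Rightarrow> real \<Rightarrow> nat \<Rightarrow> real" where
  "bessel_term n x m = (x / 2) ^ (2 * m + n) / (fact m * fact (n + m))"

lemma bessel_term_le_exp_term: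
  assumes "x \<ge> 0"
  shows "bessel_term n x m \<le> (x / 2) ^ n / fact n * ((x / 2)\<^sup>2 ^ m / fact m)"
proof -
  have "fact n * fact m \<le> (fact m * fact (n + m) :: real)"
    using fact_mono[of n "n + m"] by (simp add: mult.commute)
  then have "bessel_term n x m \<le> (x / 2) ^ (2 * m + n) / (fact n * fact m)"
    unfolding bessel_term_def using assms by (intro divide_left_mono) auto
  also have "\<dots> = (x / 2) ^ n / fact n * ((x / 2)\<^sup>2 ^ m / fact m)"
    by (simp add: power_add mult.commute flip: power_mult)
  finally show ?thesis .
qed

lemma exp_series_sums: "(\<lambda>m. (y::real) ^ m / fact m) sums exp y"
  using exp_converges[of y] by (simp add: divide_inverse_commute)

lemma besselI_sums:
  assumes "x \<ge> 0"
  shows "bessel_term n x sums besselI n x"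
proof -
  have "summable (bessel_term n x)"
  proof (rule summable_comparison_test'[where N = 0])
    show "summable (\<lambda>m. (x / 2) ^ n / fact n * ((x / 2)\<^sup>2 ^ m / fact m))"
      using exp_series_sums by (intro summable_mult sums_summable)
    show "norm (bessel_term n x m) \<le> (x / 2) ^ n / fact n * ((x / 2)\<^sup>2 ^ m / fact m)" for m
      using bessel_term_le_exp_term[OF assms] assms by (simp add: bessel_term_def)
  qed
  then show ?thesis
    unfolding besselI_def bessel_term_def[abs_def] by (simp add: summable_sums)
qed

lemma besselI_pos:
  assumes "x > 0"
  shows "besselI n x > 0"
proof -
  have sums: "bessel_term n x sums besselI n x"
    using assms by (intro besselI_sums) simp
  have "0 < suminf (bessel_term n x)"
    using sums assms by (intro suminf_pos) (auto simp: sums_iff bessel_term_def)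
  then show ?thesis using sums by (simp add: sums_iff)
qed

lemma besselI_0_ge_1:
  assumes "x \<ge> 0"
  shows "besselI 0 x \<ge> 1"
proof -
  have "sum (bessel_term 0 x) {0} \<le> suminf (bessel_term 0 x)"
    using besselI_sums[OF assms, of 0] assms
    by (intro sum_le_suminf) (auto simp: sums_iff bessel_term_def)
  then show ?thesis using besselI_sums[OF assms, of 0] by (simp add: sums_iff bessel_term_def)
qed

lemma besselI_le_exp:
  assumes "x \<ge> 0"
  shows "besselI n x \<le> (x / 2) ^ n / fact n * exp ((x / 2)\<^sup>2)"
proof (rule sums_le[OF _ besselI_sums[OF assms]])
  show "(\<lambda>m. (x / 2) ^ n / fact n * ((x / 2)\<^sup>2 ^ m / fact m)) sums
          ((x / 2) ^ n / fact n * exp ((x / 2)\<^sup>2))"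
    by (intro sums_mult exp_series_sums)
qed (rule bessel_term_le_exp_term[OF assms])

lemma besselI_Suc_le:
  assumes "x \<ge> 0"
  shows "besselI (Suc n) x \<le> x / 2 * besselI n x"
proof (rule sums_le[OF _ besselI_sums[OF assms]])
  show "(\<lambda>m. x / 2 * bessel_term n x m) sums (x / 2 * besselI n x)"
    by (intro sums_mult besselI_sums assms)
  show "bessel_term (Suc n) x m \<le> x / 2 * bessel_term n x m" for m
  proof -
    have "fact (n + m) \<le> (fact (Suc n + m) :: real)" by (intro fact_mono) simp
    then have "(x / 2) ^ (2 * m + Suc n) / (fact m * fact (Suc n + m))
               \<le> (x / 2) ^ (2 * m + Suc n) / (fact m * fact (n + m))"
      using assms by (intro divide_left_mono mult_left_mono) auto
    then show ?thesis unfolding bessel_term_def by (simp add: mult.commute)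
  qed
qed

lemma besselI_ratio_bounds:
  assumes "x > 0"
  shows "0 \<le> besselI (Suc n) x / besselI n x" "besselI (Suc n) x / besselI n x \<le> x / 2"
  using besselI_pos[OF assms, of n] besselI_pos[OF assms, of "Suc n"] besselI_Suc_le[of x n] assms
  by (simp_all add: divide_le_eq)

text \<open>Term-wise form of the three-term recurrence; the index shift m+1 on the left matches the
  index m of the order n+2 series.\<close>
lemma bessel_term_recurrence:
  assumes "x > 0"
  shows "bessel_term j x (Suc m) - bessel_term (j + 2) x m
           = 2 * real (j + 1) / x * bessel_term (j + 1) x (Suc m)"
proof -
  have frac: "y / (a * F * G) - y / (F * (b * G)) = 2 * (b - a) / x * (y * (x / 2) / (a * F * (b * G)))"
    if "a > 0" "b > 0" "F > 0" "G > 0" for a b F G y :: real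
    using that assms by (simp add: field_simps)
  define y where "y = (x / 2) ^ (2 * m + j + 2)"
  have pow: "(x / 2) ^ (2 * Suc m + j) = y" "(x / 2) ^ (2 * m + (j + 2)) = y"
    "(x / 2) ^ (2 * Suc m + (j + 1)) = y * (x / 2)"
    by (simp_all add: y_def algebra_simps)
  have fct: "fact (Suc m) = (real m + 1) * fact m"
    "fact (j + 2 + m) = (real j + real m + 2) * fact (j + Suc m)"
    "fact (j + 1 + Suc m) = (real j + real m + 2) * fact (j + Suc m)"
    by (simp_all add: algebra_simps)
  show ?thesis
    unfolding bessel_term_def pow fct
    using frac[of "real m + 1" "real j + real m + 2" "fact m" "fact (j + Suc m)" y] by simp
qed

lemma besselI_recurrence:
  assumes "x > 0"
  shows "besselI j x - besselI (j + 2) x = 2 * real (j + 1) / x * besselI (j + 1) x"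
proof -
  define c where "c = 2 * real (j + 1) / x"
  have x: "x \<ge> 0" using assms by simp
  have "(\<lambda>m. bessel_term j x (Suc m) - bessel_term (j + 2) x m)
          sums (besselI j x - bessel_term j x 0 - besselI (j + 2) x)"
    using besselI_sums[OF x] by (intro sums_diff) (simp_all add: sums_Suc_iff)
  moreover have "(\<lambda>m. c * bessel_term (j + 1) x (Suc m))
          sums (c * (besselI (j + 1) x - bessel_term (j + 1) x 0))"
    using besselI_sums[OF x] by (intro sums_mult) (simp add: sums_Suc_iff)
  ultimately have "besselI j x - bessel_term j x 0 - besselI (j + 2) x
                     = c * (besselI (j + 1) x - bessel_term (j + 1) x 0)"
    unfolding c_def bessel_term_recurrence[OF assms] by (rule sums_unique2)
  moreover have "bessel_term j x 0 = c * bessel_term (j + 1) x 0"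
  proof -
    have frac: "z / F = 2 * a / x * (z * (x / 2) / (a * F))" if "a > 0" "F > 0" for a F z :: real
      using that assms by (simp add: field_simps)
    have "bessel_term j x 0 = (x / 2) ^ j / fact j"
      "bessel_term (j + 1) x 0 = (x / 2) ^ j * (x / 2) / (real (j + 1) * fact j)"
      by (simp_all add: bessel_term_def mult.commute)
    then show ?thesis
      unfolding c_def using frac[of "real (j + 1)" "fact j" "(x / 2) ^ j"] by simp
  qed
  ultimately show ?thesis unfolding c_def[symmetric] by (simp add: right_diff_distrib)
qed

text \<open>The map (k, m) \<mapsto> (a, b) with b - a = k and min a b = m identifies \<int> \<times> \<nat> with \<nat> \<times> \<nat>;
  it turns the Cauchy square of the exponential series into the double series of all I_|k|.\<close>
definition diagonal_pair :: "int \<times> nat \<Rightarrow> nat \<times> nat" where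
  "diagonal_pair = (\<lambda>(k, m). if k \<ge> 0 then (m, m + nat k) else (m + nat (- k), m))"

lemma bij_diagonal_pair: "bij diagonal_pair"
proof (rule bij_betwI[where g = "\<lambda>(a, b). (int b - int a, min a b)"])
  show "(\<lambda>(a, b). (int b - int a, min a b)) (diagonal_pair km) = km" for km
    by (cases km) (auto simp: diagonal_pair_def)
  show "diagonal_pair ((\<lambda>(a, b). (int b - int a, min a b)) ab) = ab" for ab
    by (cases ab) (auto simp: diagonal_pair_def)
qed auto

lemma besselI_int_has_sum:
  assumes "x \<ge> 0"
  shows "((\<lambda>k::int. besselI (nat \<bar>k\<bar>) x) has_sum exp x) UNIV"
proof -
  define y where "y = x / 2"
  have y: "y \<ge> 0" using assms by (simp add: y_def)
  define e where "e = (\<lambda>(a, b). y ^ a / fact a * (y ^ b / fact b) :: real)"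
  have rows: "((\<lambda>b. e (a, b)) has_sum (y ^ a / fact a * exp y)) UNIV" for a
    using y sums_mult[OF exp_series_sums, of "y ^ a / fact a" y] unfolding e_def
    by (intro sums_nonneg_imp_has_sum) auto
  have cols: "((\<lambda>a. y ^ a / fact a * exp y) has_sum (exp y * exp y)) UNIV"
    using y by (intro sums_nonneg_imp_has_sum sums_mult2 exp_series_sums) auto
  have "e summable_on UNIV \<times> UNIV"
    using rows cols y by (intro summable_on_SigmaI[OF rows]) (auto simp: e_def intro: has_sum_imp_summable)
  then have "(e has_sum exp x) UNIV"
    using has_sum_SigmaI[OF rows cols] by (simp add: y_def flip: exp_add)
  then have "((\<lambda>km. e (diagonal_pair km)) has_sum exp x) UNIV"
    using has_sum_reindex_bij_betw[OF bij_diagonal_pair, of e "exp x"] by simp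
  moreover have "e (diagonal_pair km) = bessel_term (nat \<bar>fst km\<bar>) x (snd km)" for km
  proof (cases km)
    case (Pair k m)
    have split: "y ^ m * y ^ (m + j) = y ^ (j + m * 2)" for j
      by (simp add: power_add mult_2_right mult.commute)
    show ?thesis
      by (auto simp: Pair e_def diagonal_pair_def bessel_term_def y_def[symmetric] split
          add.commute mult.commute)
  qed
  ultimately have "((\<lambda>km. bessel_term (nat \<bar>fst km\<bar>) x (snd km)) has_sum exp x) (UNIV \<times> UNIV)"
    by simp
  moreover have "(bessel_term (nat \<bar>k\<bar>) x has_sum besselI (nat \<bar>k\<bar>) x) UNIV" for k :: int
    using besselI_sums[OF assms] assms
    by (intro sums_nonneg_imp_has_sum) (auto simp: bessel_term_def)
  ultimately show ?thesis
    using has_sum_SigmaD[where f = "\<lambda>km. bessel_term (nat \<bar>fst km\<bar>) x (snd km)" and A = UNIV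
        and B = "\<lambda>_. UNIV"] by simp
qed

lemma has_sum_diff:
  fixes f g :: "'a \<Rightarrow> real"
  assumes "(f has_sum a) A" "(g has_sum b) A"
  shows "((\<lambda>k. f k - g k) has_sum (a - b)) A"
  using has_sum_add[OF assms(1) has_sum_uminusI[OF assms(2)]] by simp

lemma has_sum_int_shift:
  fixes g :: "int \<Rightarrow> real"
  shows "((\<lambda>k. g (k + d)) has_sum s) UNIV \<longleftrightarrow> (g has_sum s) UNIV"
proof -
  have "bij (\<lambda>k. k + d)"
    by (rule bij_betwI[where g = "\<lambda>k. k - d"]) auto
  then show ?thesis by (rule has_sum_reindex_bij_betw)
qed

lemma summable_on_int_abs:
  fixes F :: "nat \<Rightarrow> real"
  assumes "\<And>n. F n \<ge> 0" "summable F"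
  shows "(\<lambda>k::int. F (nat \<bar>k\<bar>)) summable_on UNIV"
proof -
  have F: "F summable_on UNIV"
    using assms by (intro summable_nonneg_imp_summable_on) auto
  have pos: "(\<lambda>k::int. F (nat \<bar>k\<bar>)) summable_on range int"
    using F by (subst summable_on_reindex) (auto simp: o_def)
  have neg: "(\<lambda>k::int. F (nat \<bar>k\<bar>)) summable_on range (\<lambda>n. - int n)"
    using F by (subst summable_on_reindex) (auto simp: o_def inj_on_def)
  have "k \<in> range int \<union> range (\<lambda>n. - int n)" for k :: int
  proof (cases "k \<ge> 0")
    case True
    then show ?thesis by (intro UnI1 range_eqI[of _ _ "nat k"]) simp
  next
    case False
    then show ?thesis by (intro UnI2 range_eqI[of _ _ "nat (- k)"]) simp
  qed
  then have "(UNIV :: int set) = range int \<union> range (\<lambda>n. - int n)" by blast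
  then show ?thesis using summable_on_union[OF pos neg] by simp
qed

text \<open>The law of X_\<Delta> (a symmetric Skellam law) as a function of x = \<theta>\<Delta>, and the score
  h_\<Delta> + |k|/x - 1 whose second moment is \<phi>.\<close>
definition skellam :: "real \<Rightarrow> int \<Rightarrow> real" where
  "skellam x k = exp (- x) * besselI (nat \<bar>k\<bar>) x"

definition score :: "real \<Rightarrow> int \<Rightarrow> real" where
  "score x k = besselI (nat \<bar>k\<bar> + 1) x / besselI (nat \<bar>k\<bar>) x + \<bar>real_of_int k\<bar> / x - 1"

lemma skellam_pos: "x > 0 \<Longrightarrow> skellam x k > 0"
  unfolding skellam_def by (simp add: besselI_pos)

lemma skellam_minus [simp]: "skellam x (- k) = skellam x k"
  unfolding skellam_def by simp

lemma score_minus [simp]: "score x (- k) = score x k"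
  unfolding score_def by simp

lemma skellam_has_sum_1:
  assumes "x \<ge> 0"
  shows "(skellam x has_sum 1) UNIV"
  using has_sum_cmult_right[OF besselI_int_has_sum[OF assms], of "exp (- x)"]
  unfolding skellam_def[abs_def] by (simp add: exp_add[symmetric])

lemma skellam_Suc_neighbours:
  "skellam x (int (Suc n) - 1) = exp (- x) * besselI n x"
  "skellam x (int (Suc n) + 1) = exp (- x) * besselI (n + 2) x"
  "skellam x (int (Suc n)) = exp (- x) * besselI (n + 1) x"
  by (simp_all add: skellam_def nat_add_distrib)

text \<open>The Bessel recurrence read as a difference equation for the law (Stein identity):
  k p(k) = x/2 (p(k-1) - p(k+1)).  By symmetry it suffices to treat k \<ge> 0.\<close>
lemma skellam_stein_recurrence:
  assumes "x > 0"
  shows "real_of_int k * skellam x k = x / 2 * (skellam x (k - 1) - skellam x (k + 1))"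
proof -
  have nonneg: "real_of_int k * skellam x k = x / 2 * (skellam x (k - 1) - skellam x (k + 1))"
    if "k \<ge> 0" for k
  proof (cases "k = 0")
    case True
    then show ?thesis using skellam_minus[of x 1] by simp
  next
    case False
    then obtain n where k: "k = int (Suc n)"
      using \<open>k \<ge> 0\<close> by (metis not0_implies_Suc nonneg_int_cases of_nat_0)
    have "x / 2 * (skellam x (k - 1) - skellam x (k + 1))
            = exp (- x) * (x / 2 * (besselI n x - besselI (n + 2) x))"
      unfolding k skellam_Suc_neighbours by (simp add: algebra_simps)
    also have "\<dots> = exp (- x) * (real (n + 1) * besselI (n + 1) x)"
      using besselI_recurrence[OF assms, of n] assms by simp
    also have "\<dots> = real_of_int k * skellam x k"
      unfolding k skellam_Suc_neighbours by simp
    finally show ?thesis ..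
  qed
  show ?thesis
  proof (cases "k \<ge> 0")
    case True
    then show ?thesis by (rule nonneg)
  next
    case False
    then have "real_of_int (- k) * skellam x (- k) = x / 2 * (skellam x (- k - 1) - skellam x (- k + 1))"
      by (intro nonneg) simp
    moreover have "- k - 1 = - (k + 1)" "- k + 1 = - (k - 1)" by simp_all
    ultimately show ?thesis by (simp only: skellam_minus) (simp add: algebra_simps)
  qed
qed

lemma skellam_score_recurrence:
  assumes "x > 0"
  shows "skellam x k * score x k = (skellam x (k - 1) + skellam x (k + 1)) / 2 - skellam x k"
proof -
  have nonneg: "skellam x k * score x k = (skellam x (k - 1) + skellam x (k + 1)) / 2 - skellam x k"
    if "k \<ge> 0" for k
  proof (cases "k = 0")
    case True
    then show ?thesis
      using skellam_minus[of x 1] besselI_pos[OF assms, of 0]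
      by (simp add: skellam_def score_def field_simps)
  next
    case False
    then obtain n where k: "k = int (Suc n)"
      using \<open>k \<ge> 0\<close> by (metis not0_implies_Suc nonneg_int_cases of_nat_0)
    have score: "score x (int (Suc n)) = besselI (n + 2) x / besselI (n + 1) x + real (n + 1) / x - 1"
      unfolding score_def by (simp add: nat_add_distrib)
    have "skellam x k * score x k
            = exp (- x) * (besselI (n + 2) x + real (n + 1) / x * besselI (n + 1) x) - skellam x k"
      using besselI_pos[OF assms, of "n + 1"]
      unfolding k score skellam_Suc_neighbours by (simp add: field_simps)
    also have "real (n + 1) / x * besselI (n + 1) x = (besselI n x - besselI (n + 2) x) / 2"
      using besselI_recurrence[OF assms, of n] assms by (simp add: field_simps)
    also have "exp (- x) * (besselI (n + 2) x + (besselI n x - besselI (n + 2) x) / 2) - skellam x k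
                 = (skellam x (k - 1) + skellam x (k + 1)) / 2 - skellam x k"
      unfolding k skellam_Suc_neighbours by (simp add: field_simps)
    finally show ?thesis .
  qed
  show ?thesis
  proof (cases "k \<ge> 0")
    case True
    then show ?thesis by (rule nonneg)
  next
    case False
    then have "skellam x (- k) * score x (- k)
                 = (skellam x (- k - 1) + skellam x (- k + 1)) / 2 - skellam x (- k)"
      by (intro nonneg) simp
    moreover have "- k - 1 = - (k + 1)" "- k + 1 = - (k - 1)" by simp_all
    ultimately show ?thesis by (simp only: skellam_minus score_minus) (simp add: algebra_simps)
  qed
qed

lemma one_plus_square_le_four_power: "1 + real n ^ 2 \<le> 4 ^ n"
proof -
  have "real (Suc n) \<le> real (2 ^ n)"
    using less_exp[of n] by (simp only: of_nat_le_iff Suc_le_eq)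
  then have "(real n + 1) ^ 2 \<le> (2 ^ n) ^ 2" by (intro power_mono) auto
  then show ?thesis by (simp add: power2_eq_square power_mult_distrib[symmetric] algebra_simps)
qed

lemma skellam_weighted_summable:
  assumes "x > 0"
  shows "(\<lambda>k. skellam x k * (1 + (real_of_int k)\<^sup>2)\<^sup>2) summable_on UNIV"
proof -
  define F where "F n = exp (- x) * besselI n x * (1 + (real n)\<^sup>2)\<^sup>2" for n
  have regroup: "a * (p / f * e) * q = a * e * (p * q / f)" for a p f e q :: real
    by (simp add: divide_inverse mult_ac)
  have F_le: "F n \<le> exp (- x) * exp ((x / 2)\<^sup>2) * ((8 * x) ^ n / fact n)" for n
  proof -
    have "(1 + (real n)\<^sup>2)\<^sup>2 \<le> (4 ^ n)\<^sup>2"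
      using one_plus_square_le_four_power by (intro power_mono) auto
    also have "\<dots> = 16 ^ n" by (simp add: power2_eq_square flip: power_mult_distrib)
    finally have w: "(1 + (real n)\<^sup>2)\<^sup>2 \<le> 16 ^ n" .
    have b: "besselI n x \<le> (x / 2) ^ n / fact n * exp ((x / 2)\<^sup>2)"
      using assms by (intro besselI_le_exp) simp
    have "F n \<le> exp (- x) * ((x / 2) ^ n / fact n * exp ((x / 2)\<^sup>2)) * 16 ^ n"
      unfolding F_def using besselI_pos[OF assms, of n] assms
      by (intro mult_mono mult_left_mono b w) simp_all
    also have "\<dots> = exp (- x) * exp ((x / 2)\<^sup>2) * ((x / 2) ^ n * 16 ^ n / fact n)"
      by (rule regroup)
    also have "(x / 2) ^ n * 16 ^ n = (x / 2 * 16) ^ n"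
      by (rule power_mult_distrib[symmetric])
    also have "x / 2 * 16 = 8 * x" by simp
    finally show ?thesis .
  qed
  have F_nonneg: "F n \<ge> 0" for n
    using besselI_pos[OF assms, of n] unfolding F_def by simp
  have "summable F"
  proof (rule summable_comparison_test'[where N = 0])
    show "summable (\<lambda>n. exp (- x) * exp ((x / 2)\<^sup>2) * ((8 * x) ^ n / fact n))"
      using exp_series_sums by (intro summable_mult sums_summable)
    show "norm (F n) \<le> exp (- x) * exp ((x / 2)\<^sup>2) * ((8 * x) ^ n / fact n)" for n
      using F_le[of n] F_nonneg[of n] by simp
  qed
  then have "(\<lambda>k::int. F (nat \<bar>k\<bar>)) summable_on UNIV"
    using F_nonneg by (intro summable_on_int_abs)
  moreover have "F (nat \<bar>k\<bar>) = skellam x k * (1 + (real_of_int k)\<^sup>2)\<^sup>2" for k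
    unfolding F_def skellam_def by simp
  ultimately show ?thesis by simp
qed

text \<open>Test functions whose expectation under the law is certainly defined: those of growth O(k^4).\<close>
definition quartic_growth :: "(int \<Rightarrow> real) \<Rightarrow> bool" where
  "quartic_growth f \<longleftrightarrow> (\<exists>C. \<forall>k. \<bar>f k\<bar> \<le> C * (1 + (real_of_int k)\<^sup>2)\<^sup>2)"

lemma quartic_growthI: "(\<And>k. \<bar>f k\<bar> \<le> C * (1 + (real_of_int k)\<^sup>2)\<^sup>2) \<Longrightarrow> quartic_growth f"
  unfolding quartic_growth_def by blast

lemma quartic_growth_add:
  assumes "quartic_growth f" "quartic_growth g"
  shows "quartic_growth (\<lambda>k. f k + g k)"
proof -
  obtain C D where C: "\<And>k. \<bar>f k\<bar> \<le> C * (1 + (real_of_int k)\<^sup>2)\<^sup>2"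
    and D: "\<And>k. \<bar>g k\<bar> \<le> D * (1 + (real_of_int k)\<^sup>2)\<^sup>2"
    using assms unfolding quartic_growth_def by blast
  have "\<bar>f k + g k\<bar> \<le> (C + D) * (1 + (real_of_int k)\<^sup>2)\<^sup>2" for k
    using abs_triangle_ineq[of "f k" "g k"] C[of k] D[of k] by (simp add: distrib_right)
  then show ?thesis by (rule quartic_growthI)
qed

lemma quartic_growth_cmult:
  assumes "quartic_growth f"
  shows "quartic_growth (\<lambda>k. c * f k)"
proof -
  obtain C where C: "\<And>k. \<bar>f k\<bar> \<le> C * (1 + (real_of_int k)\<^sup>2)\<^sup>2"
    using assms unfolding quartic_growth_def by blast
  have "\<bar>c * f k\<bar> \<le> (\<bar>c\<bar> * C) * (1 + (real_of_int k)\<^sup>2)\<^sup>2" for k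
    using mult_left_mono[OF C[of k], of "\<bar>c\<bar>"] by (simp add: abs_mult mult.assoc)
  then show ?thesis by (rule quartic_growthI)
qed

lemma abs_power_le_quartic:
  fixes t :: real
  assumes "n \<le> 4"
  shows "\<bar>t\<bar> ^ n \<le> (1 + t\<^sup>2)\<^sup>2"
proof (cases "\<bar>t\<bar> \<le> 1")
  case True
  then have "\<bar>t\<bar> ^ n \<le> 1" by (simp add: power_le_one)
  also have "1 \<le> (1 + t\<^sup>2)\<^sup>2" by (simp add: one_le_power)
  finally show ?thesis .
next
  case False
  then have "\<bar>t\<bar> ^ n \<le> \<bar>t\<bar> ^ 4" using assms by (intro power_increasing) auto
  also have "\<dots> = (t\<^sup>2)\<^sup>2" by (simp flip: power_mult)
  also have "\<dots> \<le> (1 + t\<^sup>2)\<^sup>2" by (intro power_mono) auto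
  finally show ?thesis .
qed

lemma quartic_growth_power: "n \<le> 4 \<Longrightarrow> quartic_growth (\<lambda>k. real_of_int k ^ n)"
  by (rule quartic_growthI[where C = 1]) (simp add: power_abs abs_power_le_quartic)

lemma quartic_growth_shift:
  assumes "quartic_growth f"
  shows "quartic_growth (\<lambda>k. f (k + d))" and "quartic_growth (\<lambda>k. f (k - d))"
proof -
  obtain C where C: "\<And>k. \<bar>f k\<bar> \<le> C * (1 + (real_of_int k)\<^sup>2)\<^sup>2"
    using assms unfolding quartic_growth_def by blast
  have "C \<ge> 0" using C[of 0] by simp
  have weight: "1 + (t + s)\<^sup>2 \<le> 2 * (1 + s\<^sup>2) * (1 + t\<^sup>2)" for s t :: real
    using sum_squares_ge_zero[of "t - s" 0] zero_le_mult_iff[of "s\<^sup>2" "t\<^sup>2"]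
    by (simp add: power2_eq_square algebra_simps)
  have shift: "quartic_growth (\<lambda>k. f (k + e))" for e
  proof (rule quartic_growthI)
    fix k
    have "(1 + (real_of_int (k + e))\<^sup>2)\<^sup>2 \<le> (2 * (1 + (real_of_int e)\<^sup>2) * (1 + (real_of_int k)\<^sup>2))\<^sup>2"
      using weight[of "real_of_int k" "real_of_int e"] by (intro power_mono) auto
    then show "\<bar>f (k + e)\<bar> \<le> (C * (2 * (1 + (real_of_int e)\<^sup>2))\<^sup>2) * (1 + (real_of_int k)\<^sup>2)\<^sup>2"
      using C[of "k + e"] mult_left_mono[OF _ \<open>C \<ge> 0\<close>] by (fastforce simp: power_mult_distrib)
  qed
  show "quartic_growth (\<lambda>k. f (k + d))" by (rule shift)
  show "quartic_growth (\<lambda>k. f (k - d))" using shift[of "- d"] by simp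
qed

lemma skellam_summable:
  assumes "x > 0" "quartic_growth f"
  shows "(\<lambda>k. skellam x k * f k) summable_on UNIV"
proof -
  obtain C where C: "\<And>k. \<bar>f k\<bar> \<le> C * (1 + (real_of_int k)\<^sup>2)\<^sup>2"
    using assms unfolding quartic_growth_def by blast
  have "Infinite_Sum.abs_summable_on (\<lambda>k. C * (skellam x k * (1 + (real_of_int k)\<^sup>2)\<^sup>2)) UNIV"
    using summable_on_cmult_right[OF skellam_weighted_summable[OF assms(1)]]
    by (rule summable_on_iff_abs_summable_on_real[THEN iffD1])
  then have "Infinite_Sum.abs_summable_on (\<lambda>k. skellam x k * f k) UNIV"
  proof (rule Infinite_Sum.abs_summable_on_comparison_test)
    fix k
    have p: "0 \<le> skellam x k" using skellam_pos[OF assms(1)] less_imp_le by blast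
    have "norm (skellam x k * f k) = skellam x k * \<bar>f k\<bar>" using p by (simp add: abs_mult)
    also have "\<dots> \<le> skellam x k * (C * (1 + (real_of_int k)\<^sup>2)\<^sup>2)" by (rule mult_left_mono[OF C p])
    also have "\<dots> = C * (skellam x k * (1 + (real_of_int k)\<^sup>2)\<^sup>2)" by (rule mult.left_commute)
    also have "\<dots> \<le> norm (C * (skellam x k * (1 + (real_of_int k)\<^sup>2)\<^sup>2))" by simp
    finally show "norm (skellam x k * f k) \<le> norm (C * (skellam x k * (1 + (real_of_int k)\<^sup>2)\<^sup>2))" .
  qed
  then show ?thesis by (rule summable_on_iff_abs_summable_on_real[THEN iffD2])
qed

lemma skellam_stein_identity:
  assumes x: "x > 0" and f: "quartic_growth f"
    and s: "((\<lambda>k. skellam x k * (f (k + 1) - f (k - 1))) has_sum s) UNIV"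
  shows "((\<lambda>k. skellam x k * (real_of_int k * f k)) has_sum (x / 2 * s)) UNIV"
proof -
  define a where "a = (\<Sum>\<^sub>\<infinity>k. skellam x k * f (k + 1))"
  define b where "b = (\<Sum>\<^sub>\<infinity>k. skellam x k * f (k - 1))"
  have a: "((\<lambda>k. skellam x k * f (k + 1)) has_sum a) UNIV"
    unfolding a_def using x f by (intro has_sum_infsum skellam_summable quartic_growth_shift)
  have b: "((\<lambda>k. skellam x k * f (k - 1)) has_sum b) UNIV"
    unfolding b_def using x f by (intro has_sum_infsum skellam_summable quartic_growth_shift)
  have "((\<lambda>k. skellam x k * (f (k + 1) - f (k - 1))) has_sum (a - b)) UNIV"
    using has_sum_diff[OF a b] by (simp add: right_diff_distrib)
  then have "s = a - b" using s by (rule has_sum_unique[rotated])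
  have "((\<lambda>k. skellam x (k - 1) * f k) has_sum a) UNIV"
    using a has_sum_int_shift[of "\<lambda>k. skellam x k * f (k + 1)" "- 1"] by simp
  moreover have "((\<lambda>k. skellam x (k + 1) * f k) has_sum b) UNIV"
    using b has_sum_int_shift[of "\<lambda>k. skellam x k * f (k - 1)" 1] by simp
  ultimately have "((\<lambda>k. x / 2 * (skellam x (k - 1) * f k - skellam x (k + 1) * f k)) has_sum (x / 2 * s)) UNIV"
    unfolding \<open>s = a - b\<close> by (intro has_sum_cmult_right has_sum_diff)
  moreover have "x / 2 * (skellam x (k - 1) * f k - skellam x (k + 1) * f k) = skellam x k * (real_of_int k * f k)" for k
  proof -
    have "x / 2 * (skellam x (k - 1) * f k - skellam x (k + 1) * f k)
            = x / 2 * (skellam x (k - 1) - skellam x (k + 1)) * f k"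
      by (simp add: algebra_simps)
    also have "\<dots> = real_of_int k * skellam x k * f k"
      unfolding skellam_stein_recurrence[OF x] ..
    finally show ?thesis by simp
  qed
  ultimately show ?thesis by simp
qed

lemma skellam_score_identity:
  assumes x: "x > 0" and f: "quartic_growth f"
    and s: "((\<lambda>k. skellam x k * ((f (k + 1) + f (k - 1)) / 2 - f k)) has_sum s) UNIV"
  shows "((\<lambda>k. skellam x k * (score x k * f k)) has_sum s) UNIV"
proof -
  define a where "a = (\<Sum>\<^sub>\<infinity>k. skellam x k * f (k + 1))"
  define b where "b = (\<Sum>\<^sub>\<infinity>k. skellam x k * f (k - 1))"
  define c where "c = (\<Sum>\<^sub>\<infinity>k. skellam x k * f k)"
  have a: "((\<lambda>k. skellam x k * f (k + 1)) has_sum a) UNIV"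
    unfolding a_def using x f by (intro has_sum_infsum skellam_summable quartic_growth_shift)
  have b: "((\<lambda>k. skellam x k * f (k - 1)) has_sum b) UNIV"
    unfolding b_def using x f by (intro has_sum_infsum skellam_summable quartic_growth_shift)
  have c: "((\<lambda>k. skellam x k * f k) has_sum c) UNIV"
    unfolding c_def using x f by (intro has_sum_infsum skellam_summable)
  have "((\<lambda>k. skellam x k * ((f (k + 1) + f (k - 1)) / 2 - f k)) has_sum (1 / 2 * (a + b) - c)) UNIV"
    using has_sum_diff[OF has_sum_cmult_right[OF has_sum_add[OF a b], of "1 / 2"] c]
    by (subst (asm) has_sum_cong) (auto simp: algebra_simps)
  then have "s = 1 / 2 * (a + b) - c" using s by (rule has_sum_unique[rotated])
  have "((\<lambda>k. skellam x (k - 1) * f k) has_sum a) UNIV"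
    using a has_sum_int_shift[of "\<lambda>k. skellam x k * f (k + 1)" "- 1"] by simp
  moreover have "((\<lambda>k. skellam x (k + 1) * f k) has_sum b) UNIV"
    using b has_sum_int_shift[of "\<lambda>k. skellam x k * f (k - 1)" 1] by simp
  ultimately have "((\<lambda>k. 1 / 2 * (skellam x (k - 1) * f k + skellam x (k + 1) * f k) - skellam x k * f k)
                     has_sum s) UNIV"
    unfolding \<open>s = 1 / 2 * (a + b) - c\<close> using c by (intro has_sum_diff has_sum_cmult_right has_sum_add)
  moreover have "1 / 2 * (skellam x (k - 1) * f k + skellam x (k + 1) * f k) - skellam x k * f k
                   = skellam x k * (score x k * f k)" for k
  proof -
    have "1 / 2 * (skellam x (k - 1) * f k + skellam x (k + 1) * f k) - skellam x k * f k
            = ((skellam x (k - 1) + skellam x (k + 1)) / 2 - skellam x k) * f k"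
      by (simp add: algebra_simps)
    also have "\<dots> = skellam x k * score x k * f k"
      unfolding skellam_score_recurrence[OF x] ..
    finally show ?thesis by simp
  qed
  ultimately show ?thesis by simp
qed

text \<open>Moments of the law, from the Stein identity with f(k) = k and f(k) = k^3.\<close>
lemma skellam_second_moment:
  assumes x: "x > 0"
  shows "((\<lambda>k. skellam x k * (real_of_int k)\<^sup>2) has_sum x) UNIV"
proof -
  have "((\<lambda>k. skellam x k * (real_of_int (k + 1) - real_of_int (k - 1))) has_sum 2) UNIV"
    using has_sum_cmult_left[OF skellam_has_sum_1, of x 2] x by (simp add: mult.commute)
  then have "((\<lambda>k. skellam x k * (real_of_int k * real_of_int k)) has_sum (x / 2 * 2)) UNIV"
    using quartic_growth_power[of 1] x by (intro skellam_stein_identity) simp_all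
  then show ?thesis by (simp add: power2_eq_square)
qed

lemma skellam_fourth_moment:
  assumes x: "x > 0"
  shows "((\<lambda>k. skellam x k * real_of_int k ^ 4) has_sum (3 * x\<^sup>2 + x)) UNIV"
proof -
  have "((\<lambda>k. 6 * (skellam x k * (real_of_int k)\<^sup>2) + 2 * skellam x k) has_sum (6 * x + 2)) UNIV"
    using has_sum_add[OF has_sum_cmult_right[OF skellam_second_moment[OF x], of 6]
        has_sum_cmult_right[OF skellam_has_sum_1, of x 2]] x by simp
  then have "((\<lambda>k. skellam x k * (real_of_int (k + 1) ^ 3 - real_of_int (k - 1) ^ 3)) has_sum (6 * x + 2)) UNIV"
    by (simp add: algebra_simps power2_eq_square power3_eq_cube)
  then have "((\<lambda>k. skellam x k * (real_of_int k * real_of_int k ^ 3)) has_sum (x / 2 * (6 * x + 2))) UNIV"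
    using quartic_growth_power[of 3] x by (intro skellam_stein_identity) simp_all
  then show ?thesis by (simp add: algebra_simps power2_eq_square power3_eq_cube power4_eq_xxxx)
qed

lemma skellam_variance_of_square:
  assumes x: "x > 0"
  shows "((\<lambda>k. skellam x k * ((real_of_int k)\<^sup>2 - x)\<^sup>2) has_sum (x + 2 * x\<^sup>2)) UNIV"
proof -
  have "((\<lambda>k. skellam x k * real_of_int k ^ 4 - 2 * x * (skellam x k * (real_of_int k)\<^sup>2)
            + x\<^sup>2 * skellam x k) has_sum (3 * x\<^sup>2 + x - 2 * x * x + x\<^sup>2 * 1)) UNIV"
    using x by (intro has_sum_add has_sum_diff has_sum_cmult_right skellam_fourth_moment
        skellam_second_moment skellam_has_sum_1) simp_all
  then show ?thesis
    by (simp add: algebra_simps power2_eq_square power4_eq_xxxx)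
qed

lemma skellam_score_covariance:
  assumes x: "x > 0"
  shows "((\<lambda>k. skellam x k * (score x k * ((real_of_int k)\<^sup>2 - x))) has_sum 1) UNIV"
proof (rule skellam_score_identity[OF x])
  show "quartic_growth (\<lambda>k. (real_of_int k)\<^sup>2 - x)"
    using quartic_growth_add[OF quartic_growth_power[of 2] quartic_growth_cmult[OF quartic_growth_power[of 0], of "- x"]]
    by simp
  show "((\<lambda>k. skellam x k * (((real_of_int (k + 1))\<^sup>2 - x + ((real_of_int (k - 1))\<^sup>2 - x)) / 2
           - ((real_of_int k)\<^sup>2 - x))) has_sum 1) UNIV"
    using skellam_has_sum_1[of x] x
    by (subst has_sum_cong[where g = "skellam x"]) (auto simp: field_simps power2_eq_square)
qed

text \<open>The score grows linearly in |k|, so its square is a test function of quartic growth.\<close>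
lemma quartic_growth_score_square:
  assumes x: "x > 0"
  shows "quartic_growth (\<lambda>k. (score x k)\<^sup>2)"
proof (rule quartic_growthI)
  fix k :: int
  define t where "t = \<bar>real_of_int k\<bar>"
  define r where "r = besselI (Suc (nat \<bar>k\<bar>)) x / besselI (nat \<bar>k\<bar>) x"
  define K where "K = x / 2 + 1 / x + 1"
  have r: "0 \<le> r" "r \<le> x / 2"
    unfolding r_def using besselI_ratio_bounds[OF x] by auto
  have t: "0 \<le> t" "0 \<le> t / x" using x by (simp_all add: t_def)
  have "score x k = r + t / x - 1" by (simp add: score_def r_def t_def)
  then have "\<bar>score x k\<bar> \<le> x / 2 + t / x + 1"
    using r t by (intro abs_leI) linarith+
  also have "\<dots> \<le> K * (1 + t)"
  proof -
    have "K * (1 + t) = x / 2 + t / x + 1 + (1 / x + t * (x / 2 + 1))"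
      using x by (simp add: K_def field_simps)
    moreover have "0 \<le> 1 / x + t * (x / 2 + 1)" using x t by simp
    ultimately show ?thesis by linarith
  qed
  finally have bound: "\<bar>score x k\<bar> \<le> K * (1 + t)" .
  have weight: "(1 + t)\<^sup>2 \<le> 2 * (1 + (real_of_int k)\<^sup>2)\<^sup>2"
  proof -
    have "(1 + t)\<^sup>2 \<le> 2 * (1 + t\<^sup>2)"
      using sum_squares_ge_zero[of "t - 1" 0] by (simp add: power2_eq_square algebra_simps)
    also have "1 + t\<^sup>2 \<le> (1 + t\<^sup>2)\<^sup>2"
      using mult_right_mono[of 1 "1 + t\<^sup>2" "1 + t\<^sup>2"] by (simp add: power2_eq_square)
    finally show ?thesis by (simp add: t_def)
  qed
  have "(score x k)\<^sup>2 \<le> (K * (1 + t))\<^sup>2"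
    using power_mono[OF bound abs_ge_zero, of 2] by simp
  also have "\<dots> = K\<^sup>2 * (1 + t)\<^sup>2" by (rule power_mult_distrib)
  also have "\<dots> \<le> K\<^sup>2 * (2 * (1 + (real_of_int k)\<^sup>2)\<^sup>2)"
    by (rule mult_left_mono[OF weight]) simp
  finally show "\<bar>(score x k)\<^sup>2\<bar> \<le> 2 * K\<^sup>2 * (1 + (real_of_int k)\<^sup>2)\<^sup>2"
    by (simp add: mult.assoc mult.left_commute)
qed

text \<open>Cauchy-Schwarz with remainder: E[(S - (k^2 - x)/V)^2] = \<phi> - 1/V, and the summand at k = 0
  alone bounds it from below.\<close>
lemma skellam_fisher_gap:
  assumes x: "x > 0"
  defines "V \<equiv> x + 2 * x\<^sup>2"
  shows "V * (\<Sum>\<^sub>\<infinity>k. skellam x k * (score x k)\<^sup>2) \<ge> 1 + V * (skellam x 0 * (score x 0 + x / V)\<^sup>2)"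
proof -
  define \<phi> where "\<phi> = (\<Sum>\<^sub>\<infinity>k. skellam x k * (score x k)\<^sup>2)"
  define f where "f k = (real_of_int k)\<^sup>2 - x" for k
  define D where "D k = skellam x k * (score x k - f k / V)\<^sup>2" for k
  have V: "V > 0" using x by (simp add: V_def add_pos_nonneg)
  have \<phi>: "((\<lambda>k. skellam x k * (score x k)\<^sup>2) has_sum \<phi>) UNIV"
    unfolding \<phi>_def using x quartic_growth_score_square[OF x]
    by (intro has_sum_infsum skellam_summable)
  have sum: "(D has_sum (\<phi> - 2 / V * 1 + 1 / V\<^sup>2 * V)) UNIV"
  proof -
    have "((\<lambda>k. skellam x k * (score x k)\<^sup>2 - 2 / V * (skellam x k * (score x k * f k))
              + 1 / V\<^sup>2 * (skellam x k * (f k)\<^sup>2)) has_sum (\<phi> - 2 / V * 1 + 1 / V\<^sup>2 * V)) UNIV"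
      using skellam_score_covariance[OF x] skellam_variance_of_square[OF x]
      unfolding f_def V_def[symmetric]
      by (intro has_sum_add has_sum_diff has_sum_cmult_right \<phi>)
    moreover have "skellam x k * (score x k)\<^sup>2 - 2 / V * (skellam x k * (score x k * f k))
                     + 1 / V\<^sup>2 * (skellam x k * (f k)\<^sup>2) = D k" for k
      using V by (simp add: D_def power2_eq_square field_simps)
    ultimately show ?thesis by simp
  qed
  have const: "\<phi> - 2 / V * 1 + 1 / V\<^sup>2 * V = \<phi> - 1 / V"
    using V by (simp add: power2_eq_square field_simps)
  have D: "(D has_sum (\<phi> - 1 / V)) UNIV"
    using sum unfolding const .
  have "D 0 \<le> \<phi> - 1 / V"
    by (intro has_sum_mono_neutral[OF has_sum_finiteI[of "{0}" "D 0" D] D])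
       (auto simp: D_def intro!: mult_nonneg_nonneg[OF less_imp_le[OF skellam_pos[OF x]]])
  then have "1 + V * D 0 \<le> V * \<phi>"
    using V by (simp add: field_simps)
  then show ?thesis by (simp add: D_def f_def \<phi>_def)
qed

text \<open>For x in [a, 1] the remainder is bounded below by a constant depending only on a:
  p(0) \<ge> e^{-1}, V \<ge> a, and |S(0) + x/V| \<ge> x/6 because I_1/I_0 \<le> x/2 while
  x/V - 1 = -2x/(1+2x) \<le> -2x/3.\<close>
lemma skellam_fisher_gap_uniform:
  assumes a: "0 < a" and x: "a \<le> x" "x \<le> 1"
  shows "(x + 2 * x\<^sup>2) * (\<Sum>\<^sub>\<infinity>k. skellam x k * (score x k)\<^sup>2) \<ge> 1 + a * exp (- 1) * (a / 6)\<^sup>2"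
proof -
  define V where "V = x + 2 * x\<^sup>2"
  have x0: "x > 0" using a x by simp
  have "a \<le> V" using x zero_le_power2[of x] unfolding V_def by linarith
  have atom: "skellam x 0 \<ge> exp (- 1)"
  proof -
    have "exp (- 1) \<le> exp (- x)" using x by simp
    also have "\<dots> \<le> skellam x 0"
      using besselI_0_ge_1[of x] x0 by (simp add: skellam_def)
    finally show ?thesis .
  qed
  define r where "r = besselI 1 x / besselI 0 x"
  have r: "0 \<le> r" "r \<le> x / 2"
    using besselI_ratio_bounds[OF x0, of 0] by (simp_all add: r_def)
  have "V = x * (1 + 2 * x)" by (simp add: V_def power2_eq_square algebra_simps)
  then have "x / V = 1 / (1 + 2 * x)" using x0 by simp
  moreover have "score x 0 = r - 1" by (simp add: score_def r_def)
  moreover have "1 / (1 + 2 * x) - 1 = - (2 * x / (1 + 2 * x))"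
    using x0 by (simp add: field_simps)
  ultimately have "score x 0 + x / V = r - 2 * x / (1 + 2 * x)"
    by linarith
  moreover have "2 * x / (1 + 2 * x) \<ge> 2 * x / 3"
    using x x0 by (intro divide_left_mono) auto
  ultimately have "a / 6 \<le> \<bar>score x 0 + x / V\<bar>"
    using r x by linarith
  then have "(a / 6)\<^sup>2 \<le> (score x 0 + x / V)\<^sup>2"
    using a by (metis abs_le_square_iff abs_of_pos divide_pos_pos zero_less_numeral)
  then have "a * (exp (- 1) * (a / 6)\<^sup>2) \<le> V * (skellam x 0 * (score x 0 + x / V)\<^sup>2)"
    using atom \<open>a \<le> V\<close> a skellam_pos[OF x0, of 0] by (intro mult_mono) auto
  then show ?thesis
    using skellam_fisher_gap[OF x0] unfolding V_def by (simp add: mult.assoc)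
qed

lemma phi_eq_skellam:
  "phi \<theta> \<Delta> = (\<Sum>\<^sub>\<infinity>k. skellam (\<theta> * \<Delta>) k * (score (\<theta> * \<Delta>) k)\<^sup>2)"
  unfolding phi_def pX_def hD_def skellam_def score_def by simp

lemma information_ratio_eq:
  assumes "\<theta> > 0" "\<Delta> > 0" "T > 0"
  shows "(inverse (I0 T \<theta>) + inverse (Iinf T \<Delta> \<theta>)) / inverse (IDelta T \<Delta> \<theta>)
           = (\<theta> * \<Delta> + 2 * (\<theta> * \<Delta>)\<^sup>2) * phi \<theta> \<Delta>"
  using assms unfolding I0_def Iinf_def IDelta_def by (simp add: field_simps power2_eq_square)

lemma eventually_between_Liminf_Limsup:
  fixes g :: "'a \<Rightarrow> real"
  assumes "0 < Liminf F (\<lambda>t. ereal (g t))" "Limsup F (\<lambda>t. ereal (g t)) < ereal b"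
  shows "\<exists>c > 0. \<forall>\<^sub>F t in F. c < g t \<and> g t < b"
proof -
  obtain c where c: "0 < ereal c" "ereal c < Liminf F (\<lambda>t. ereal (g t))"
    using ereal_dense2[OF assms(1)] by blast
  have "\<forall>\<^sub>F t in F. c < g t" using less_LiminfD[OF c(2)] by simp
  moreover have "\<forall>\<^sub>F t in F. g t < b" using Limsup_lessD[OF assms(2)] by simp
  ultimately show ?thesis using c(1) by (auto intro: eventually_conj)
qed

text \<open>Main theorem.  Eventually c < \<Delta>_T < 1/\<theta> for some c > 0, i.e. \<theta>\<Delta>_T lies in [\<theta>c, 1],
  so the quotient stays above 1 + \<delta> for a fixed \<delta> > 0.\<close>
theorem theorem5:
  fixes \<theta> :: real and \<Delta> :: "real \<Rightarrow> real"
  assumes "\<theta> > 0"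
    and "\<And>T. \<Delta> T > 0"
    and "0 < Liminf at_top (\<lambda>T. ereal (\<Delta> T))"
    and "Limsup at_top (\<lambda>T. ereal (\<Delta> T)) \<le> ereal (1 / (4 * \<theta>))"
  shows "Liminf at_top (\<lambda>T. ereal ((inverse (I0 T \<theta>) + inverse (Iinf T (\<Delta> T) \<theta>))
                                   / inverse (IDelta T (\<Delta> T) \<theta>))) > 1"
proof -
  have "1 / (4 * \<theta>) < 1 / \<theta>" using assms(1) by (simp add: field_simps)
  then have "Limsup at_top (\<lambda>T. ereal (\<Delta> T)) < ereal (1 / \<theta>)"
    by (intro order.strict_trans1[OF assms(4)]) simp
  then obtain c where "c > 0" and between: "\<forall>\<^sub>F T in at_top. c < \<Delta> T \<and> \<Delta> T < 1 / \<theta>"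
    using eventually_between_Liminf_Limsup[OF assms(3)] by blast
  define a where "a = \<theta> * c"
  define \<delta> where "\<delta> = a * exp (- 1) * (a / 6)\<^sup>2"
  have "a > 0" "\<delta> > 0" using assms(1) \<open>c > 0\<close> by (simp_all add: a_def \<delta>_def)
  have "\<forall>\<^sub>F T in at_top. ereal (1 + \<delta>) \<le> ereal ((inverse (I0 T \<theta>) + inverse (Iinf T (\<Delta> T) \<theta>))
                                                 / inverse (IDelta T (\<Delta> T) \<theta>))"
    using between eventually_gt_at_top[of 0]
  proof eventually_elim
    case (elim T)
    then have "a \<le> \<theta> * \<Delta> T" "\<theta> * \<Delta> T \<le> 1"
      using assms(1) by (simp_all add: a_def field_simps)
    then show ?case
      using skellam_fisher_gap_uniform[OF \<open>a > 0\<close>] assms(1,2) elim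
      by (simp add: information_ratio_eq phi_eq_skellam \<delta>_def)
  qed
  then have "ereal (1 + \<delta>) \<le> Liminf at_top (\<lambda>T. ereal ((inverse (I0 T \<theta>) + inverse (Iinf T (\<Delta> T) \<theta>))
                                   / inverse (IDelta T (\<Delta> T) \<theta>)))"
    by (rule Liminf_bounded)
  moreover have "1 < ereal (1 + \<delta>)" using \<open>\<delta> > 0\<close> by simp
  ultimately show ?thesis by (meson order.strict_trans2)
qed

end
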